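(* Let $k\ge2$ be an integer and $\Gamma_k(t)=\Psi_k(t^3-t^2+7t+1)\in\mathbb{Q}[t]$. Then the map $\alpha\mapsto-\alpha^2-7$ is a $\operatorname{Gal}(\overline{\mathbb{Q}}/\mathbb{Q})$-equivariant bijection from the set of complex roots of $\Gamma_k$ to the set of complex roots of $\widetilde{\Delta}_{3k,3}$. In particular, $\widetilde{\Delta}_{3k,3}$ is irreducible over $\mathbb{Q}$ if and only if $\Gamma_k$ is irreducible over $\mathbb{Q}$.
   Context: $\Psi_k$ denotes the $k$-th cyclotomic polynomial. For the family $f_c(z)=z^2+c$, let $\delta_3(x,c)$ be the third multiplier polynomial (the polynomial monic in $x$ with $\delta_3(x,c)^3=\operatorname{Res}_z(\Phi_3^*(z,c),x-(f_c^{\circ3})'(z))$, where $\Phi_3^*(z,c)=(f_c^{\circ3}(z)-z)/(f_c(z)-z)$); explicitly $\delta_3(x,C/4)=x^2-(2C+16)x+(C^3+8C^2+16C+64)$. Set $\widetilde{\Delta}_{3k,3}(C)=\operatorname{Res}_x(\Psi_k(x),\delta_3(x,C/4))\in\mathbb{Z}[C]$. Roots are taken without multiplicity. *)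

theory Defs
  imports Complex_Main "HOL-Computational_Algebra.Polynomial" "Subresultants.Resultant_Prelim"
begin

text \<open>The k-th cyclotomic polynomial, via the recursion x^k - 1 = prod over d dvd k of Psi_d
  (Psi_0 is set to 1 by convention; it is never used).\<close>
function cyclotomic :: "nat \<Rightarrow> rat poly" where
  "cyclotomic k = (if k = 0 then 1 else
     (monom 1 k - 1) div (\<Prod>d\<in>{d. d dvd k \<and> d < k}. cyclotomic d))"
  by auto
termination
  by (relation "measure id") auto

definition Gamma :: "nat \<Rightarrow> rat poly" where
  "Gamma k = pcompose (cyclotomic k) [:1, 7, -1, 1:]"

definition varC :: "rat poly" where "varC = [:0, 1:]"

text \<open>delta_3(x, C/4) = x^2 - (2C+16) x + (C^3+8C^2+16C+64), a polynomial in x with coefficients in Q[C].\<close>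
definition delta3 :: "rat poly poly" where
  "delta3 = [: varC^3 + 8*varC^2 + 16*varC + 64, -(2*varC + 16), 1 :]"

definition Delta_tilde :: "nat \<Rightarrow> rat poly" where
  "Delta_tilde k = resultant (map_poly (\<lambda>a. [:a:]) (cyclotomic k)) delta3"

definition complex_roots :: "rat poly \<Rightarrow> complex set" where
  "complex_roots p = {z. poly (map_poly of_rat p) z = 0}"

text \<open>Gal(Qbar/Q): field automorphisms of the algebraic closure of Q inside C.\<close>
definition galois_Qbar :: "(complex \<Rightarrow> complex) set" where
  "galois_Qbar = {\<sigma>. bij_betw \<sigma> {z. algebraic z} {z. algebraic z} \<and>
     (\<forall>x\<in>{z. algebraic z}. \<forall>y\<in>{z. algebraic z}. \<sigma> (x + y) = \<sigma> x + \<sigma> y \<and> \<sigma> (x * y) = \<sigma> x * \<sigma> y)}"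

end

(*
  Substituting C = -t\<^sup>2 - 7 into \<delta>\<^sub>3(x, C/4) makes it split over \<rat>[t] as
  (x - H(t)) (x - H(-t)) with H(t) = t\<^sup>3 - t\<^sup>2 + 7t + 1, hence
  \<Delta>\<^sub>3\<^sub>k\<^sub>,\<^sub>3(-t\<^sup>2 - 7) = \<Gamma>\<^sub>k(t) \<Gamma>\<^sub>k(-t): the polynomial \<Delta>\<^sub>3\<^sub>k\<^sub>,\<^sub>3 is the norm of \<Gamma>\<^sub>k along
  C = -t\<^sup>2 - 7, i.e. Res\<^sub>t(\<Gamma>\<^sub>k(t), t\<^sup>2 + C + 7). Its roots are therefore the values -\<alpha>\<^sup>2 - 7 at
  roots \<alpha> of \<Gamma>\<^sub>k, and \<alpha> \<mapsto> -\<alpha>\<^sup>2 - 7 is injective on them because \<Gamma>\<^sub>k never vanishes at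
  both \<alpha> and -\<alpha>: then H(\<alpha>) and H(-\<alpha>) would both be roots of unity, and the parallelogram
  law for H(\<alpha>) \<plusminus> H(-\<alpha>) = 2(1 - \<alpha>\<^sup>2), 2\<alpha>(\<alpha>\<^sup>2 + 7) forces \<alpha> = 0, while H(0) = 1 is not a
  primitive k-th root of unity for k \<ge> 2.
  The same coprimality of \<Gamma>\<^sub>k(t) and \<Gamma>\<^sub>k(-t) shows that the norm of an irreducible \<Gamma>\<^sub>k is
  irreducible; conversely the norm is multiplicative and preserves degrees.
*)

theory Submission
  imports Defs
    "HOL-Computational_Algebra.Fundamental_Theorem_Algebra"
    "HOL-Computational_Algebra.Polynomial_Factorial"
    "HOL-Computational_Algebra.Field_as_Ring"
begin

declare cyclotomic.simps [simp del]

interpretation of_rat_poly: map_poly_inj_idom_hom "of_rat :: rat \<Rightarrow> complex" ..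

definition primitive_roots_unity :: "nat \<Rightarrow> complex set" where
  "primitive_roots_unity k = {z. z ^ k = 1 \<and> (\<forall>j. 0 < j \<and> j < k \<longrightarrow> z ^ j \<noteq> 1)}"

lemma monom_minus_one_eq_prod_roots_unity:
  assumes "0 < n"
  shows "(monom 1 n - 1 :: complex poly) = (\<Prod>z\<in>{z. z ^ n = 1}. [:-z, 1:])"
proof -
  define p :: "complex poly" where "p = monom 1 n - 1"
  have "lead_coeff p = 1"
    using assms lead_coeff_add_le[of "-1" "monom 1 n"] by (simp add: p_def degree_monom_eq)
  have roots: "poly p z = 0 \<longleftrightarrow> z ^ n = 1" for z
    unfolding p_def by (simp add: poly_monom)
  have "rsquarefree p"
    unfolding rsquarefree_roots
  proof (intro allI notI)
    fix z assume z: "poly p z = 0 \<and> poly (pderiv p) z = 0"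
    then have "z \<noteq> 0" using roots assms by (auto simp: power_0_left)
    moreover have "of_nat n * z ^ (n - 1) = 0"
      using z unfolding p_def by (simp add: pderiv_diff pderiv_monom poly_monom)
    ultimately show False using assms by simp
  qed
  from complex_poly_decompose_rsquarefree[OF this] \<open>lead_coeff p = 1\<close> roots
  show ?thesis unfolding p_def by simp
qed

lemma primitive_roots_unity_subset: "primitive_roots_unity k \<subseteq> {z. z ^ k = 1}"
  unfolding primitive_roots_unity_def by auto

lemma finite_primitive_roots_unity: "0 < k \<Longrightarrow> finite (primitive_roots_unity k)"
  using finite_roots_unity[of k] primitive_roots_unity_subset[of k]
  by (auto intro: finite_subset)

lemma primitive_roots_unity_disjoint:
  assumes "0 < d" "0 < e" "d \<noteq> e"
  shows "primitive_roots_unity d \<inter> primitive_roots_unity e = {}"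
  using assms unfolding primitive_roots_unity_def by (auto simp: neq_iff)

lemma roots_unity_eq_Union_primitive:
  assumes "0 < k"
  shows "{z. z ^ k = 1} = (\<Union>d\<in>{d. d dvd k}. primitive_roots_unity d)"
proof (intro antisym subsetI)
  fix z :: complex assume "z \<in> {z. z ^ k = 1}"
  then have zk: "z ^ k = 1" by simp
  define d where "d = (LEAST d. 0 < d \<and> z ^ d = 1)"
  have d: "0 < d" "z ^ d = 1"
    using LeastI[of "\<lambda>d. 0 < d \<and> z ^ d = 1" k] assms zk unfolding d_def by auto
  have d_least: "z ^ j \<noteq> 1" if "0 < j" "j < d" for j
    using not_less_Least[of j "\<lambda>d. 0 < d \<and> z ^ d = 1"] that unfolding d_def by auto
  have "z ^ k = (z ^ d) ^ (k div d) * z ^ (k mod d)"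
    by (metis power_add power_mult mult_div_mod_eq)
  then have "z ^ (k mod d) = 1" using zk d(2) by simp
  then have "d dvd k"
    using d_least[of "k mod d"] d(1) by (auto simp: dvd_eq_mod_eq_0)
  moreover have "z \<in> primitive_roots_unity d"
    unfolding primitive_roots_unity_def using d d_least by auto
  ultimately show "z \<in> (\<Union>d\<in>{d. d dvd k}. primitive_roots_unity d)" by auto
next
  fix z assume "z \<in> (\<Union>d\<in>{d. d dvd k}. primitive_roots_unity d)"
  then obtain d c where "k = d * c" "z ^ d = 1"
    unfolding primitive_roots_unity_def by blast
  then show "z \<in> {z. z ^ k = 1}" by (simp add: power_mult)
qed

lemma Union_proper_divisors_primitive_roots_unity:
  assumes "0 < k"
  shows "(\<Union>d\<in>{d. d dvd k \<and> d < k}. primitive_roots_unity d) = {z. z ^ k = 1} - primitive_roots_unity k"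
proof -
  have "{d. d dvd k} = insert k {d. d dvd k \<and> d < k}"
    using assms by (auto dest: dvd_imp_le)
  moreover have "primitive_roots_unity k \<inter> primitive_roots_unity d = {}"
    if "d dvd k" "d < k" for d
    using primitive_roots_unity_disjoint[of k d] dvd_pos_nat[OF assms] that assms by auto
  ultimately show ?thesis
    using roots_unity_eq_Union_primitive[OF assms] by auto
qed

lemma map_poly_cyclotomic_eq_prod:
  assumes "0 < k"
  shows "map_poly of_rat (cyclotomic k) = (\<Prod>z\<in>primitive_roots_unity k. [:-z, 1:])"
  using assms
proof (induction k rule: less_induct)
  case (less k)
  define D where "D = {d. d dvd k \<and> d < k}"
  define U where "U = {z :: complex. z ^ k = 1}"
  have "finite U" unfolding U_def using finite_roots_unity[of k] less.prems by auto
  have D_pos: "d \<in> D \<Longrightarrow> 0 < d" for d unfolding D_def using less.prems by (auto intro: Nat.gr0I)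
  have "map_poly of_rat (\<Prod>d\<in>D. cyclotomic d) = (\<Prod>d\<in>D. \<Prod>z\<in>primitive_roots_unity d. [:-z, 1:])"
    using less.IH D_pos by (simp add: of_rat_poly.hom_prod D_def)
  also have "\<dots> = (\<Prod>z\<in>(\<Union>d\<in>D. primitive_roots_unity d). [:-z, 1:])"
    by (rule prod.UNION_disjoint[symmetric])
      (use D_pos finite_primitive_roots_unity primitive_roots_unity_disjoint in \<open>auto simp: D_def\<close>)
  also have "\<dots> = (\<Prod>z\<in>U - primitive_roots_unity k. [:-z, 1:])"
    unfolding D_def U_def Union_proper_divisors_primitive_roots_unity[OF less.prems] ..
  finally have divisors: "map_poly of_rat (\<Prod>d\<in>D. cyclotomic d) = (\<Prod>z\<in>U - primitive_roots_unity k. [:-z, 1:])" .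
  have "map_poly of_rat (cyclotomic k)
      = map_poly of_rat (monom 1 k - 1) div map_poly of_rat (\<Prod>d\<in>D. cyclotomic d)"
    using less.prems by (subst cyclotomic.simps) (simp add: D_def of_rat_hom.map_poly_div)
  also have "\<dots> = (monom 1 k - 1) div (\<Prod>z\<in>U - primitive_roots_unity k. [:-z, 1:])"
    unfolding divisors by (simp add: of_rat_poly.hom_minus)
  also have "(monom 1 k - 1 :: complex poly)
      = (\<Prod>z\<in>U - primitive_roots_unity k. [:-z, 1:]) * (\<Prod>z\<in>primitive_roots_unity k. [:-z, 1:])"
    unfolding monom_minus_one_eq_prod_roots_unity[OF less.prems] U_def[symmetric]
    by (rule prod.subset_diff) (use primitive_roots_unity_subset \<open>finite U\<close> in \<open>auto simp: U_def\<close>)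
  also have "\<dots> div (\<Prod>z\<in>U - primitive_roots_unity k. [:-z, 1:]) = (\<Prod>z\<in>primitive_roots_unity k. [:-z, 1:])"
    by (rule nonzero_mult_div_cancel_left) (use \<open>finite U\<close> in auto)
  finally show ?case .
qed

lemma complex_roots_cyclotomic:
  "0 < k \<Longrightarrow> complex_roots (cyclotomic k) = primitive_roots_unity k"
  unfolding complex_roots_def map_poly_cyclotomic_eq_prod
  by (auto simp: poly_prod finite_primitive_roots_unity)

lemma norm_primitive_root_unity: "0 < k \<Longrightarrow> z \<in> primitive_roots_unity k \<Longrightarrow> cmod z = 1"
  unfolding primitive_roots_unity_def using power_eq_1_iff[of z k] by auto

lemma one_notin_primitive_roots_unity: "2 \<le> k \<Longrightarrow> 1 \<notin> primitive_roots_unity k"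
  unfolding primitive_roots_unity_def by auto

lemma det_2x2:
  fixes A :: "'a :: comm_ring_1 mat"
  assumes "A \<in> carrier_mat 2 2"
  shows "det A = A $$ (0,0) * A $$ (1,1) - A $$ (0,1) * A $$ (1,0)"
proof -
  have "det A = (\<Sum>i<2. A $$ (i,0) * cofactor A i 0)"
    by (rule laplace_expansion_column[OF assms]) auto
  also have "\<dots> = A $$ (0,0) * A $$ (1,1) - A $$ (0,1) * A $$ (1,0)"
    using assms by (simp add: cofactor_def numeral_2_eq_2 det_single mat_delete_def)
  finally show ?thesis .
qed

lemma poly_eq_sum_coeff_reversed:
  fixes p :: "'a :: comm_semiring_1 poly"
  assumes "degree p \<le> n" "coeff p 0 = 0"
  shows "poly p x = (\<Sum>j<n. coeff p (n - j) * x ^ (n - j))"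
proof -
  have "poly p x = (\<Sum>i\<le>n. coeff p i * x ^ i)"
    using assms(1) by (simp add: poly_altdef sum.mono_neutral_left coeff_eq_0)
  also have "\<dots> = (\<Sum>i\<in>{1..n}. coeff p i * x ^ i)"
    by (rule sum.mono_neutral_right) (use assms(2) in \<open>auto simp: not_le\<close>)
  also have "\<dots> = (\<Sum>j<n. coeff p (n - j) * x ^ (n - j))"
    by (rule sum.reindex_bij_witness[of _ "\<lambda>i. n - i" "\<lambda>j. n - j"]) auto
  finally show ?thesis .
qed

lemma sylvester_mat_row_poly:
  fixes p q :: "'a :: comm_semiring_1 poly"
  defines "m \<equiv> degree p" and "n \<equiv> degree q"
  assumes "i < m + n"
  shows "(\<Sum>j<m + n. sylvester_mat p q $$ (i,j) * x ^ (m + n - j))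
    = (if i < n then x ^ (n - i) * poly p x else x ^ (m + n - i) * poly q x)"
proof -
  define r where "r = (if i < n then monom 1 (n - i) * p else monom 1 (m + n - i) * q)"
  have "degree r \<le> m + n"
    unfolding r_def m_def n_def by (auto simp: degree_monom_eq intro!: order.trans[OF degree_mult_le])
  moreover have "coeff r 0 = 0"
    unfolding r_def using assms(3) by (auto simp: coeff_monom_mult)
  ultimately have "poly r x = (\<Sum>j<m + n. coeff r (m + n - j) * x ^ (m + n - j))"
    by (rule poly_eq_sum_coeff_reversed)
  also have "\<dots> = (\<Sum>j<m + n. sylvester_mat p q $$ (i,j) * x ^ (m + n - j))"
    using sylvester_index_mat2[of i p q] assms(3) by (auto simp: r_def m_def n_def)
  finally show ?thesis
    unfolding r_def by (auto simp: poly_monom)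
qed

(* Right multiplication by eval_cols_mat n a b replaces the first two columns of an n \<times> n
   matrix M by the values at a and b of its rows read as polynomials \<Sum>\<^sub>j M\<^sub>i\<^sub>j x\<^sup>n\<^sup>-\<^sup>j, which for a
   Sylvester matrix are x\<^sup>k f and x\<^sup>k g (sylvester_mat_row_poly). *)
definition eval_cols_mat :: "nat \<Rightarrow> 'a \<Rightarrow> 'a \<Rightarrow> 'a :: comm_ring_1 mat" where
  "eval_cols_mat n a b = mat n n (\<lambda>(i, j).
     if j = 0 then a ^ (n - i) else if j = 1 then b ^ (n - i) else if i = j then 1 else 0)"

lemma eval_cols_mat_carrier [simp]: "eval_cols_mat n a b \<in> carrier_mat n n"
  by (simp add: eval_cols_mat_def)

lemma det_eval_cols_mat:
  fixes a b :: "'a :: idom"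
  shows "det (eval_cols_mat (m + 2) a b) = (a * b) ^ (m + 1) * (a - b)"
proof -
  define V where "V = mat 2 2 (\<lambda>(i, j). if j = 0 then a ^ (m + 2 - i) else b ^ (m + 2 - i))"
  define W where "W = mat m 2 (\<lambda>(i, j). if j = 0 then a ^ (m - i) else b ^ (m - i))"
  have blocks: "eval_cols_mat (m + 2) a b = four_block_mat V (0\<^sub>m 2 m) W (1\<^sub>m m)"
    by (rule eq_matI) (auto simp: eval_cols_mat_def V_def W_def)
  have "det (eval_cols_mat (m + 2) a b) = det V * det (1\<^sub>m m)"
    unfolding blocks by (rule det_four_block_mat_upper_right_zero) (auto simp: V_def W_def)
  also have "\<dots> = (a * b) ^ (m + 1) * (a - b)"
    by (subst det_2x2) (auto simp: V_def algebra_simps power2_eq_square)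
  finally show ?thesis .
qed


lemma sylvester_mat_mult_eval_cols_mat:
  fixes f g :: "'a :: comm_ring_1 poly" and a b :: 'a
  defines "m \<equiv> degree f" and "S \<equiv> sylvester_mat f g" and "E \<equiv> eval_cols_mat (degree f + 2) a b"
  assumes g: "degree g = 2" "poly g a = 0" "poly g b = 0"
  shows "S * E = four_block_mat
    (mat 2 2 (\<lambda>(i, j). if j = 0 then a ^ (2 - i) * poly f a else b ^ (2 - i) * poly f b))
    (mat 2 m (\<lambda>(i, j). S $$ (i, j + 2))) (0\<^sub>m m 2) (mat m m (\<lambda>(i, j). S $$ (i + 2, j + 2)))"
    (is "_ = ?B")
proof (rule eq_matI)
  have S: "S \<in> carrier_mat (m + 2) (m + 2)"
    unfolding S_def m_def using g(1) sylvester_carrier_mat by auto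
  fix i j assume ij: "i < dim_row ?B" "j < dim_col ?B"
  then have i: "i < m + 2" and j: "j < m + 2" by auto
  have row: "(\<Sum>k<m + 2. S $$ (i, k) * x ^ (m + 2 - k))
      = (if i < 2 then x ^ (2 - i) * poly f x else 0)" if "poly g x = 0" for x
    using sylvester_mat_row_poly[of i f g x] i that unfolding S_def m_def g(1) by simp
  have "(S * E) $$ (i, j) = (\<Sum>k<m + 2. S $$ (i, k) * E $$ (k, j))"
    using S i j by (auto simp: scalar_prod_def lessThan_atLeast0 E_def m_def eval_cols_mat_def intro!: sum.cong)
  also have "\<dots> = (if j = 0 then (if i < 2 then a ^ (2 - i) * poly f a else 0)
      else if j = 1 then (if i < 2 then b ^ (2 - i) * poly f b else 0) else S $$ (i, j))"
  proof -
    consider "j = 0" | "j = 1" | "j \<ge> 2" by linarith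
    then show ?thesis
    proof cases
      case 1 then show ?thesis using row[OF g(2)] by (simp add: E_def m_def eval_cols_mat_def)
    next
      case 2 then show ?thesis using row[OF g(3)] by (simp add: E_def m_def eval_cols_mat_def)
    next
      case 3
      then have "(\<Sum>k<m + 2. S $$ (i, k) * E $$ (k, j)) = (\<Sum>k<m + 2. if k = j then S $$ (i, j) else 0)"
        using j by (intro sum.cong) (auto simp: E_def m_def eval_cols_mat_def)
      then show ?thesis using 3 j by simp
    qed
  qed
  also have "\<dots> = ?B $$ (i, j)"
    using ij by (auto simp: Suc_diff_Suc numeral_2_eq_2)
  finally show "(S * E) $$ (i, j) = ?B $$ (i, j)" .
qed (auto simp: S_def E_def m_def g(1) eval_cols_mat_def)

lemma resultant_mult_linear_factors:
  fixes f :: "'a :: idom poly"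
  assumes "a \<noteq> b" "a * b \<noteq> 0"
  shows "resultant f ([:-a, 1:] * [:-b, 1:]) = poly f a * poly f b"
proof -
  define g where "g = [:-a, 1:] * [:-b, 1:]"
  have g: "g = [:a * b, -(a + b), 1:]" "degree g = 2" "poly g a = 0" "poly g b = 0"
    by (simp_all add: g_def algebra_simps)
  define m where "m = degree f"
  define S where "S = sylvester_mat f g"
  define L where "L = mat m m (\<lambda>(i, j). S $$ (i + 2, j + 2))"
  have S: "S \<in> carrier_mat (m + 2) (m + 2)"
    unfolding S_def m_def using g(2) sylvester_carrier_mat by auto
  have S_index: "i < m + 2 \<Longrightarrow> j < m + 2 \<Longrightarrow> S $$ (i, j) = (if i < 2 then
      if i \<le> j \<and> j - i \<le> m then coeff f (m + i - j) else 0
      else if i - 2 \<le> j \<and> j \<le> i then coeff g (i - j) else 0)" for i j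
    using sylvester_index_mat[of i f g j] g(2) unfolding S_def m_def by simp
  have "det L = prod_list (diag_mat L)"
    by (rule det_lower_triangular[of m]) (auto simp: L_def S_index)
  also have "\<dots> = (a * b) ^ m"
    unfolding prod_list_diag_prod by (simp add: L_def S_index g(1))
  finally have det_L: "det L = (a * b) ^ m" .
  have "det (S * eval_cols_mat (m + 2) a b)
      = det (mat 2 2 (\<lambda>(i, j). if j = 0 then a ^ (2 - i) * poly f a else b ^ (2 - i) * poly f b)) * det L"
    unfolding S_def m_def sylvester_mat_mult_eval_cols_mat[OF g(2-4)] L_def
    by (rule det_four_block_mat_lower_left_zero) auto
  also have "\<dots> = a * b * (a - b) * (poly f a * poly f b) * (a * b) ^ m"
    by (subst det_2x2) (auto simp: det_L algebra_simps power2_eq_square)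
  finally have "det S * det (eval_cols_mat (m + 2) a b) = a * b * (a - b) * (poly f a * poly f b) * (a * b) ^ m"
    by (simp only: det_mult[OF S eval_cols_mat_carrier])
  then have "det S * ((a * b) ^ (m + 1) * (a - b)) = poly f a * poly f b * ((a * b) ^ (m + 1) * (a - b))"
    unfolding det_eval_cols_mat by (simp add: algebra_simps)
  then show ?thesis
    using assms unfolding resultant_def S_def g_def by simp
qed

definition C_of_t :: "'a :: comm_ring_1 poly" where
  "C_of_t = [:-7, 0, -1:]"

definition neg_var :: "'a :: comm_ring_1 poly \<Rightarrow> 'a poly" where
  "neg_var p = p \<circ>\<^sub>p [:0, -1:]"

(* Res\<^sub>t(A(t), t\<^sup>2 + C + 7) as a polynomial in C, the coefficients of A being lifted to
   constants: the norm of A along C = -t\<^sup>2 - 7. *)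
definition quad_norm :: "'a :: comm_ring_1 poly \<Rightarrow> 'a poly" where
  "quad_norm A = resultant (map_poly (\<lambda>a. [:a:]) A) [:[:7, 1:], 0, 1:]"

lemma degree_C_of_t [simp]: "degree (C_of_t :: 'a :: {comm_ring_1, ring_no_zero_divisors} poly) = 2"
  by (simp add: C_of_t_def)

lemma poly_C_of_t [simp]: "poly C_of_t z = - (z ^ 2) - 7"
  by (simp add: C_of_t_def power2_eq_square algebra_simps)

lemma poly_neg_var [simp]: "poly (neg_var p) z = poly p (- z)"
  by (simp add: neg_var_def poly_pcompose)

lemma neg_var_mult: "neg_var (p * q) = neg_var p * neg_var q"
  by (simp add: neg_var_def pcompose_mult)

lemma degree_neg_var [simp]: "degree (neg_var (p :: 'a :: idom poly)) = degree p"
  by (simp add: neg_var_def)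

lemma neg_var_eq_0_iff [simp]: "neg_var (p :: 'a :: idom poly) = 0 \<longleftrightarrow> p = 0"
  by (simp add: neg_var_def pcompose_eq_0_iff)

lemma neg_var_pcompose_C_of_t: "neg_var (p \<circ>\<^sub>p C_of_t) = p \<circ>\<^sub>p C_of_t"
  by (simp add: neg_var_def C_of_t_def pcompose_assoc[symmetric])

lemma pcompose_C_of_t_eq_iff:
  fixes p q :: "'a :: idom poly"
  shows "p \<circ>\<^sub>p C_of_t = q \<circ>\<^sub>p C_of_t \<longleftrightarrow> p = q"
  using pcompose_eq_0_iff[of C_of_t "p - q"] by (auto simp: pcompose_diff)

lemma poly_map_poly_const: "poly (map_poly (\<lambda>a. [:a:]) p) q = p \<circ>\<^sub>p q"
  by (induction p) (auto simp: algebra_simps)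

lemma pcompose_resultant_quadratic:
  fixes f :: "'a :: idom poly" and q :: "'a poly poly"
  assumes "degree q = 2" and q: "map_poly (\<lambda>p. p \<circ>\<^sub>p T) q = [:-A, 1:] * [:-B, 1:]"
    and "A \<noteq> B" "A * B \<noteq> 0"
  shows "resultant (map_poly (\<lambda>a. [:a:]) f) q \<circ>\<^sub>p T = (f \<circ>\<^sub>p A) * (f \<circ>\<^sub>p B)"
proof -
  have const: "map_poly (\<lambda>p. p \<circ>\<^sub>p T) (map_poly (\<lambda>a. [:a:]) f) = map_poly (\<lambda>a. [:a:]) f"
    by (subst map_poly_map_poly) (auto simp: o_def)
  have "resultant (map_poly (\<lambda>a. [:a:]) f) q \<circ>\<^sub>p T
      = resultant (map_poly (\<lambda>p. p \<circ>\<^sub>p T) (map_poly (\<lambda>a. [:a:]) f)) (map_poly (\<lambda>p. p \<circ>\<^sub>p T) q)"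
    by (rule pcompose_hom.resultant_map_poly[symmetric]) (auto simp: const q assms(1))
  also have "\<dots> = poly (map_poly (\<lambda>a. [:a:]) f) A * poly (map_poly (\<lambda>a. [:a:]) f) B"
    unfolding const q by (rule resultant_mult_linear_factors) fact+
  finally show ?thesis by (simp add: poly_map_poly_const)
qed

lemma quad_norm_pcompose_C_of_t:
  fixes A :: "'a :: {idom, ring_char_0} poly"
  shows "quad_norm A \<circ>\<^sub>p C_of_t = A * neg_var A"
proof -
  have q: "map_poly (\<lambda>p. p \<circ>\<^sub>p C_of_t) [:[:7, 1:], 0, 1:] = [:-[:0, 1:], 1:] * [:-[:0, -1:], 1 :: 'a poly:]"
    by (simp add: C_of_t_def)
  have "[:0, 1:] \<noteq> ([:0, -1:] :: 'a poly)" "[:0, 1:] * [:0, -1:] \<noteq> (0 :: 'a poly)"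
    by simp_all
  from pcompose_resultant_quadratic[OF _ q this]
  have "quad_norm A \<circ>\<^sub>p C_of_t = (A \<circ>\<^sub>p [:0, 1:]) * (A \<circ>\<^sub>p [:0, -1:])"
    unfolding quad_norm_def by simp
  then show ?thesis
    by (simp add: neg_var_def)
qed

lemma quad_norm_mult:
  fixes A B :: "'a :: {idom, ring_char_0} poly"
  shows "quad_norm (A * B) = quad_norm A * quad_norm B"
proof -
  have "quad_norm (A * B) \<circ>\<^sub>p C_of_t = (quad_norm A * quad_norm B) \<circ>\<^sub>p C_of_t"
    by (simp add: pcompose_mult quad_norm_pcompose_C_of_t neg_var_mult mult_ac)
  then show ?thesis
    by (simp only: pcompose_C_of_t_eq_iff)
qed

lemma degree_quad_norm:
  fixes A :: "'a :: {idom, ring_char_0} poly"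
  shows "degree (quad_norm A) = degree A"
proof -
  have "degree (quad_norm A \<circ>\<^sub>p C_of_t) = degree (A * neg_var A)"
    by (simp only: quad_norm_pcompose_C_of_t)
  then have "degree (quad_norm A) * 2 = degree A * 2"
    by (cases "A = 0") (simp_all add: degree_mult_eq)
  then show ?thesis by linarith
qed

lemma map_poly_of_rat_neg_var: "map_poly of_rat (neg_var p) = neg_var (map_poly of_rat p)"
  by (simp add: neg_var_def of_rat_hom.map_poly_pcompose)

lemma poly_quad_norm:
  "poly (map_poly of_rat (quad_norm A)) (- (z ^ 2) - 7)
    = poly (map_poly of_rat A) z * poly (map_poly of_rat A) (- z :: complex)"
proof -
  have "poly (map_poly of_rat (quad_norm A \<circ>\<^sub>p C_of_t)) z = poly (map_poly of_rat (A * neg_var A)) z"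
    by (simp only: quad_norm_pcompose_C_of_t)
  moreover have "map_poly of_rat C_of_t = (C_of_t :: complex poly)"
    by (simp add: C_of_t_def)
  ultimately show ?thesis
    by (simp add: of_rat_hom.map_poly_pcompose poly_pcompose of_rat_poly.hom_mult map_poly_of_rat_neg_var)
qed

lemma complex_roots_neg_var: "z \<in> complex_roots (neg_var A) \<longleftrightarrow> - z \<in> complex_roots A"
  by (simp add: complex_roots_def map_poly_of_rat_neg_var)

lemma complex_roots_dvd: "p dvd q \<Longrightarrow> z \<in> complex_roots p \<Longrightarrow> z \<in> complex_roots q"
  by (elim dvdE) (simp add: complex_roots_def of_rat_poly.hom_mult)

lemma algebraic_if_complex_root: "p \<noteq> 0 \<Longrightarrow> z \<in> complex_roots p \<Longrightarrow> algebraic z"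
  by (rule algebraicI'[of "map_poly of_rat p"]) (auto simp: complex_roots_def coeff_map_poly)

lemma coprime_if_no_common_complex_root:
  fixes p q :: "rat poly"
  assumes "\<And>z. z \<in> complex_roots p \<Longrightarrow> z \<notin> complex_roots q"
  shows "coprime p q"
proof -
  have "z \<notin> complex_roots (gcd p q)" for z
    using assms complex_roots_dvd[OF gcd_dvd1, of z p q] complex_roots_dvd[OF gcd_dvd2, of z p q] by blast
  then have "\<nexists>z :: complex. poly (map_poly of_rat (gcd p q)) z = 0"
    unfolding complex_roots_def by blast
  then obtain c where c: "c \<noteq> 0" "map_poly (of_rat :: rat \<Rightarrow> complex) (gcd p q) = [:c:]"
    using fundamental_theorem_of_algebra_alt by blast
  then have "gcd p q \<noteq> 0"
    by auto
  moreover have "degree (gcd p q) = 0"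
    using arg_cong[OF c(2), of degree] by simp
  ultimately have "is_unit (gcd p q)"
    using is_unit_iff_degree[of "gcd p q"] by blast
  then show ?thesis
    by (simp only: is_unit_gcd)
qed

lemma bij_betw_complex_roots_quad_norm:
  assumes opposite: "\<And>z. z \<in> complex_roots A \<Longrightarrow> - z \<notin> complex_roots A"
  shows "bij_betw (\<lambda>a. - (a ^ 2) - 7) (complex_roots A) (complex_roots (quad_norm A))"
  unfolding bij_betw_def
proof
  have root_iff: "- (z ^ 2) - 7 \<in> complex_roots (quad_norm A) \<longleftrightarrow>
      z \<in> complex_roots A \<or> - z \<in> complex_roots A" for z
    by (simp add: complex_roots_def poly_quad_norm)
  show "inj_on (\<lambda>a. - (a ^ 2) - 7) (complex_roots A)"
  proof (rule inj_onI)
    fix x y assume "x \<in> complex_roots A" "y \<in> complex_roots A" "- (x ^ 2) - 7 = - (y ^ 2) - 7"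
    then show "x = y"
      using opposite[of y] by (auto simp: power2_eq_iff)
  qed
  show "(\<lambda>a. - (a ^ 2) - 7) ` complex_roots A = complex_roots (quad_norm A)"
  proof (intro antisym subsetI)
    fix c assume c: "c \<in> complex_roots (quad_norm A)"
    define w where "w = csqrt (- c - 7)"
    have w: "c = - (w ^ 2) - 7" "c = - ((- w) ^ 2) - 7"
      by (simp_all add: w_def)
    then have "w \<in> complex_roots A \<or> - w \<in> complex_roots A"
      using c root_iff[of w] by simp
    then show "c \<in> (\<lambda>a. - (a ^ 2) - 7) ` complex_roots A"
    proof
      assume "w \<in> complex_roots A"
      then show ?thesis using w(1) by (rule rev_image_eqI)
    next
      assume "- w \<in> complex_roots A"
      then show ?thesis using w(2) by (rule rev_image_eqI)
    qed
  qed (use root_iff in auto)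
qed

lemma coprime_neg_var_if_no_opposite_roots:
  assumes "\<And>z. z \<in> complex_roots A \<Longrightarrow> - z \<notin> complex_roots A"
  shows "coprime A (neg_var A)"
  using assms by (intro coprime_if_no_common_complex_root) (simp add: complex_roots_neg_var)

lemma quad_norm_eq_0_iff:
  fixes A :: "'a :: {idom, ring_char_0} poly"
  shows "quad_norm A = 0 \<longleftrightarrow> A = 0"
  using quad_norm_pcompose_C_of_t[of A] pcompose_C_of_t_eq_iff[of "quad_norm A" 0] by auto

lemma is_unit_quad_norm_iff: "is_unit (quad_norm A) \<longleftrightarrow> is_unit (A :: rat poly)"
  by (cases "A = 0") (simp_all add: is_unit_iff_degree quad_norm_eq_0_iff degree_quad_norm)

lemma degree_le_if_dvd_pcompose_C_of_t:
  fixes A R :: "rat poly"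
  assumes "coprime A (neg_var A)" and A_dvd: "A dvd R \<circ>\<^sub>p C_of_t" and "R \<noteq> 0"
  shows "degree A \<le> degree R"
proof -
  have "neg_var A dvd neg_var (R \<circ>\<^sub>p C_of_t)"
    using A_dvd by (elim dvdE) (simp add: neg_var_mult)
  then have "A * neg_var A dvd R \<circ>\<^sub>p C_of_t"
    using divides_mult[OF A_dvd _ assms(1)] by (simp add: neg_var_pcompose_C_of_t)
  then have "degree (A * neg_var A) \<le> degree (R \<circ>\<^sub>p C_of_t)"
    by (rule dvd_imp_degree_le) (simp add: pcompose_eq_0_iff \<open>R \<noteq> 0\<close>)
  moreover have "degree (R \<circ>\<^sub>p C_of_t) = degree R * 2"
    by (simp only: degree_pcompose degree_C_of_t)
  moreover have "degree (A * neg_var A) = degree A * 2" if "A \<noteq> 0"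
    using degree_mult_eq[of A "neg_var A"] that by simp
  ultimately show ?thesis
    by (cases "A = 0") auto
qed

lemma irreducible_quad_norm:
  fixes A :: "rat poly"
  assumes irr: "irreducible A" and coprime: "coprime A (neg_var A)"
  shows "irreducible (quad_norm A)"
proof (rule irreducibleI)
  show N: "quad_norm A \<noteq> 0" "\<not> is_unit (quad_norm A)"
    using irr irreducible_not_unit[OF irr] by (auto simp only: quad_norm_eq_0_iff is_unit_quad_norm_iff)
  fix P Q assume PQ: "quad_norm A = P * Q"
  then have "P \<noteq> 0" "Q \<noteq> 0"
    using N(1) by auto
  have "(P \<circ>\<^sub>p C_of_t) * (Q \<circ>\<^sub>p C_of_t) = A * neg_var A"
    using quad_norm_pcompose_C_of_t[of A] unfolding PQ pcompose_mult .
  then have "A dvd (P \<circ>\<^sub>p C_of_t) * (Q \<circ>\<^sub>p C_of_t)"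
    by simp
  then have "A dvd P \<circ>\<^sub>p C_of_t \<or> A dvd Q \<circ>\<^sub>p C_of_t"
    using prime_elem_dvd_multD[of A] prime_elem_iff_irreducible[of A] irr by blast
  moreover have "degree A = degree P + degree Q"
    using degree_quad_norm[of A] degree_mult_eq[OF \<open>P \<noteq> 0\<close> \<open>Q \<noteq> 0\<close>] by (simp add: PQ)
  ultimately have "degree Q = 0 \<or> degree P = 0"
    using degree_le_if_dvd_pcompose_C_of_t[OF coprime _ \<open>P \<noteq> 0\<close>]
      degree_le_if_dvd_pcompose_C_of_t[OF coprime _ \<open>Q \<noteq> 0\<close>] by linarith
  then show "is_unit P \<or> is_unit Q"
    using \<open>P \<noteq> 0\<close> \<open>Q \<noteq> 0\<close> by (auto simp: is_unit_iff_degree)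
qed

lemma irreducible_of_irreducible_quad_norm:
  fixes A :: "rat poly"
  assumes irr: "irreducible (quad_norm A)"
  shows "irreducible A"
proof (rule irreducibleI)
  show "A \<noteq> 0" "\<not> is_unit A"
    using irr irreducible_not_unit[OF irr] by (auto simp only: quad_norm_eq_0_iff is_unit_quad_norm_iff)
  fix P Q assume "A = P * Q"
  then have "quad_norm A = quad_norm P * quad_norm Q"
    by (simp add: quad_norm_mult)
  then have "is_unit (quad_norm P) \<or> is_unit (quad_norm Q)"
    using irreducibleD[OF irr] by blast
  then show "is_unit P \<or> is_unit Q"
    by (simp only: is_unit_quad_norm_iff)
qed


(* The coefficients of \<delta>\<^sub>3 after the substitution: \<delta>\<^sub>3(x, C/4) = (x - H(t)) (x - H(-t)). *)
lemma pcompose_C_of_t_delta3_coeffs: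
  defines "H \<equiv> [:1, 7, -1, 1:] :: rat poly"
  shows "(varC ^ 3 + 8 * varC ^ 2 + 16 * varC + 64) \<circ>\<^sub>p C_of_t = H * neg_var H"
    and "(- (2 * varC + 16)) \<circ>\<^sub>p C_of_t = - (H + neg_var H)"
  by (rule poly_eq_poly_eq_iff[THEN iffD1], rule ext,
      simp add: poly_pcompose varC_def H_def algebra_simps power2_eq_square power3_eq_cube)+

lemma Delta_tilde_pcompose_C_of_t: "Delta_tilde k \<circ>\<^sub>p C_of_t = Gamma k * neg_var (Gamma k)"
proof -
  define H :: "rat poly" where "H = [:1, 7, -1, 1:]"
  note coeffs = pcompose_C_of_t_delta3_coeffs[folded H_def]
  have "map_poly (\<lambda>p. p \<circ>\<^sub>p C_of_t) delta3 = [: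
      (varC ^ 3 + 8 * varC ^ 2 + 16 * varC + 64) \<circ>\<^sub>p C_of_t, (- (2 * varC + 16)) \<circ>\<^sub>p C_of_t, 1:]"
    by (simp add: delta3_def)
  also have "\<dots> = [:-H, 1:] * [:-neg_var H, 1:]"
    unfolding coeffs by (simp add: algebra_simps)
  moreover have "H \<noteq> neg_var H" "H * neg_var H \<noteq> 0"
    by (simp_all add: H_def neg_var_def)
  ultimately have "Delta_tilde k \<circ>\<^sub>p C_of_t = (cyclotomic k \<circ>\<^sub>p H) * (cyclotomic k \<circ>\<^sub>p neg_var H)"
    unfolding Delta_tilde_def by (intro pcompose_resultant_quadratic) (simp_all add: delta3_def)
  then show ?thesis
    by (simp only: Gamma_def[folded H_def] neg_var_def pcompose_assoc)
qed

lemma Delta_tilde_eq_quad_norm_Gamma: "Delta_tilde k = quad_norm (Gamma k)"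
proof -
  have "Delta_tilde k \<circ>\<^sub>p C_of_t = quad_norm (Gamma k) \<circ>\<^sub>p C_of_t"
    by (simp only: Delta_tilde_pcompose_C_of_t quad_norm_pcompose_C_of_t)
  then show ?thesis
    by (simp only: pcompose_C_of_t_eq_iff)
qed

lemma complex_roots_Gamma:
  assumes "0 < k"
  shows "z \<in> complex_roots (Gamma k) \<longleftrightarrow> z ^ 3 - z ^ 2 + 7 * z + 1 \<in> primitive_roots_unity k"
proof -
  have "poly (map_poly of_rat (Gamma k)) z = poly (map_poly of_rat (cyclotomic k)) (z ^ 3 - z ^ 2 + 7 * z + 1)"
    unfolding Gamma_def
    by (simp add: of_rat_hom.map_poly_pcompose poly_pcompose algebra_simps power2_eq_square power3_eq_cube)
  then show ?thesis
    using complex_roots_cyclotomic[OF assms] unfolding complex_roots_def by auto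
qed

lemma nonneg_eq_0_if_cubic_le_1:
  fixes r :: real
  assumes "0 \<le> r" "(1 - r) ^ 2 + r * (r - 7) ^ 2 \<le> 1"
  shows "r = 0"
proof -
  have "r * ((2 * r - 13) ^ 2 + 19) = 4 * ((1 - r) ^ 2 + r * (r - 7) ^ 2 - 1)"
    by (simp add: power2_eq_square algebra_simps)
  also have "\<dots> \<le> 0"
    using assms(2) by simp
  finally have "r * ((2 * r - 13) ^ 2 + 19) \<le> 0" .
  moreover have "0 < (2 * r - 13) ^ 2 + 19"
    by (simp add: add_nonneg_pos)
  ultimately show ?thesis
    using assms(1) by (simp add: mult_le_0_iff)
qed

lemma norm_cubic_at_opposites_eq_1_imp_zero:
  fixes z :: complex
  assumes "cmod (z ^ 3 - z ^ 2 + 7 * z + 1) = 1" "cmod ((- z) ^ 3 - (- z) ^ 2 + 7 * (- z) + 1) = 1"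
  shows "z = 0"
proof -
  define r where "r = cmod z ^ 2"
  have parallelogram: "cmod (1 - z ^ 2) ^ 2 + r * cmod (z ^ 2 + 7) ^ 2 = 1"
  proof -
    define u v where "u = z ^ 3 - z ^ 2 + 7 * z + 1" and "v = (- z) ^ 3 - (- z) ^ 2 + 7 * (- z) + 1"
    have "cmod u = 1" "cmod v = 1"
      using assms unfolding u_def v_def .
    moreover have "cmod (u + v) ^ 2 + cmod (u - v) ^ 2 = 2 * cmod u ^ 2 + 2 * cmod v ^ 2"
      unfolding cmod_power2 by (simp add: power2_eq_square algebra_simps)
    moreover have "u + v = 2 * (1 - z ^ 2)" "u - v = 2 * z * (z ^ 2 + 7)"
      by (simp_all add: u_def v_def algebra_simps power2_eq_square power3_eq_cube)
    ultimately have "(2 * cmod (1 - z ^ 2)) ^ 2 + (2 * cmod z * cmod (z ^ 2 + 7)) ^ 2 = 4"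
      by (simp only: norm_mult) simp
    then show ?thesis
      by (simp add: r_def power_mult_distrib)
  qed
  have "\<bar>1 - r\<bar> \<le> cmod (1 - z ^ 2)" "\<bar>r - 7\<bar> \<le> cmod (z ^ 2 + 7)"
    using norm_triangle_ineq3[of 1 "z ^ 2"] norm_triangle_ineq3[of "z ^ 2" "- 7"]
    by (simp_all add: r_def norm_power)
  from power_mono[OF this(1) abs_ge_zero, of 2] power_mono[OF this(2) abs_ge_zero, of 2]
  have "(1 - r) ^ 2 \<le> cmod (1 - z ^ 2) ^ 2" and sq_7: "(r - 7) ^ 2 \<le> cmod (z ^ 2 + 7) ^ 2"
    by simp_all
  moreover have "0 \<le> r"
    by (simp add: r_def)
  ultimately have "(1 - r) ^ 2 + r * (r - 7) ^ 2 \<le> 1"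
    using parallelogram mult_left_mono[OF sq_7 \<open>0 \<le> r\<close>] by linarith
  with \<open>0 \<le> r\<close> have "r = 0"
    by (rule nonneg_eq_0_if_cubic_le_1)
  then show ?thesis
    by (simp add: r_def)
qed

lemma Gamma_roots_not_opposite:
  assumes "2 \<le> k" and root: "z \<in> complex_roots (Gamma k)"
  shows "- z \<notin> complex_roots (Gamma k)"
proof
  assume "- z \<in> complex_roots (Gamma k)"
  then have "z = 0"
    using root complex_roots_Gamma[of k] norm_primitive_root_unity[of k] assms(1)
    by (intro norm_cubic_at_opposites_eq_1_imp_zero) auto
  then show False
    using root complex_roots_Gamma[of k] one_notin_primitive_roots_unity[OF assms(1)] assms(1) by auto
qed

lemma Gamma_nonzero:
  assumes "2 \<le> k"
  shows "Gamma k \<noteq> 0"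
proof
  assume "Gamma k = 0"
  then have "0 \<in> complex_roots (Gamma k)"
    by (simp add: complex_roots_def)
  then show False
    using complex_roots_Gamma[of k 0] one_notin_primitive_roots_unity[OF assms] assms by simp
qed

lemma galois_Qbar_hom:
  assumes "\<sigma> \<in> galois_Qbar" "algebraic x" "algebraic y"
  shows "\<sigma> (x + y) = \<sigma> x + \<sigma> y" "\<sigma> (x * y) = \<sigma> x * \<sigma> y"
  using assms unfolding galois_Qbar_def by auto

lemma galois_Qbar_uminus:
  assumes "\<sigma> \<in> galois_Qbar" "algebraic x"
  shows "\<sigma> (- x) = - \<sigma> x"
proof -
  have "\<sigma> 0 = 0"
    using galois_Qbar_hom(1)[OF assms(1), of 0 0] by simp
  then show ?thesis
    using galois_Qbar_hom(1)[OF assms(1,2), of "- x"] assms(2) by (simp add: eq_neg_iff_add_eq_0 add.commute)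
qed

lemma galois_Qbar_of_int:
  assumes "\<sigma> \<in> galois_Qbar"
  shows "\<sigma> (of_int n) = of_int n"
proof -
  have alg_int: "algebraic (of_int m :: complex)" for m
    by (intro rat_imp_algebraic) simp
  have "\<sigma> ` {z. algebraic z} = {z. algebraic z}"
    using assms unfolding galois_Qbar_def bij_betw_def by blast
  then obtain w where w: "algebraic w" "\<sigma> w = 1"
    using alg_int[of 1] by (metis imageE mem_Collect_eq of_int_1)
  have one: "\<sigma> 1 = 1"
    using galois_Qbar_hom(2)[OF assms alg_int[of 1] w(1)] w(2) by simp
  have nat: "\<sigma> (of_nat m) = of_nat m" for m
  proof (induction m)
    case 0
    then show ?case using galois_Qbar_hom(1)[OF assms, of 0 0] by simp
  next
    case (Suc m)
    then show ?case
      using galois_Qbar_hom(1)[OF assms alg_int[of 1] alg_int[of "int m"]] one by (simp add: add.commute)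
  qed
  show ?thesis
  proof (cases n rule: int_cases)
    case (nonneg m)
    then show ?thesis using nat by simp
  next
    case (neg m)
    then show ?thesis
      using nat[of "Suc m"] galois_Qbar_uminus[OF assms alg_int[of "int (Suc m)"]] by simp
  qed
qed

lemma galois_Qbar_minus_square_minus_of_int:
  assumes \<sigma>: "\<sigma> \<in> galois_Qbar" and "algebraic a" "algebraic (- (a ^ 2) - of_int n)"
  shows "\<sigma> (- (a ^ 2) - of_int n) = - (\<sigma> a ^ 2) - of_int n"
proof -
  \<comment> \<open>Closure of the algebraic numbers under addition is not available, so \<open>a\<^sup>2\<close> is
    split as \<open>(- c) + (- n)\<close>, two summands already known to be algebraic.\<close>
  define c where "c = - (a ^ 2) - of_int n"
  have "algebraic (- c)" "algebraic (of_int (- n) :: complex)"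
    using assms(3) by (simp_all add: c_def[symmetric] rat_imp_algebraic)
  have "\<sigma> a * \<sigma> a = \<sigma> (- c + of_int (- n))"
    using galois_Qbar_hom(2)[OF \<sigma> assms(2,2)] by (simp add: c_def power2_eq_square)
  also have "\<dots> = - \<sigma> c - of_int n"
    using galois_Qbar_hom(1)[OF \<sigma> \<open>algebraic (- c)\<close> \<open>algebraic (of_int (- n))\<close>]
      galois_Qbar_uminus[OF \<sigma>, of c] galois_Qbar_of_int[OF \<sigma>, of "- n"] assms(3)
    by (simp add: c_def)
  finally show ?thesis
    by (simp add: c_def power2_eq_square)
qed

theorem lemma2p9:
  fixes k :: nat
  assumes "k \<ge> 2"
  shows "bij_betw (\<lambda>a::complex. - (a ^ 2) - 7) (complex_roots (Gamma k)) (complex_roots (Delta_tilde k))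
    \<and> (\<forall>\<sigma>\<in>galois_Qbar. \<forall>a\<in>complex_roots (Gamma k). \<sigma> (- (a ^ 2) - 7) = - ((\<sigma> a) ^ 2) - 7)
    \<and> (irreducible (Delta_tilde k) \<longleftrightarrow> irreducible (Gamma k))"
proof -
  have opposite: "\<And>z. z \<in> complex_roots (Gamma k) \<Longrightarrow> - z \<notin> complex_roots (Gamma k)"
    using Gamma_roots_not_opposite[OF assms] .
  have bij: "bij_betw (\<lambda>a. - (a ^ 2) - 7) (complex_roots (Gamma k)) (complex_roots (Delta_tilde k))"
    unfolding Delta_tilde_eq_quad_norm_Gamma using opposite by (rule bij_betw_complex_roots_quad_norm)
  have "Gamma k \<noteq> 0" "Delta_tilde k \<noteq> 0"
    using Gamma_nonzero[OF assms] by (simp_all add: Delta_tilde_eq_quad_norm_Gamma quad_norm_eq_0_iff)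
  then have "\<sigma> (- (a ^ 2) - 7) = - (\<sigma> a ^ 2) - 7"
    if "\<sigma> \<in> galois_Qbar" "a \<in> complex_roots (Gamma k)" for \<sigma> a
    using galois_Qbar_minus_square_minus_of_int[OF that(1), of a 7] bij_betwE[OF bij] that(2)
    by (simp add: algebraic_if_complex_root)
  moreover have "irreducible (Delta_tilde k) \<longleftrightarrow> irreducible (Gamma k)"
    unfolding Delta_tilde_eq_quad_norm_Gamma
    using irreducible_quad_norm[OF _ coprime_neg_var_if_no_opposite_roots[OF opposite]]
      irreducible_of_irreducible_quad_norm by blast
  ultimately show ?thesis
    using bij by blast
qed

end
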